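(* Let $d\ge 3$. (a) The subKautz digraph $sK(d,2)$ is antipodal and has mean distance $\overline{\partial^*}=\dfrac{2d^2+3d-1}{d^2+d}$. (b) The cyclic Kautz digraph $CK(d,3)$ has mean distance $\overline{\partial}=\dfrac{3d^3+d^2-5d-2}{d^3-d}$.
   Context: SubKautz digraph $sK(d,2)$: vertices $x_1x_2$ with $x_1\neq x_2$ in $\mathbb Z_{d+1}$; arcs $x_1x_2\to x_2x_3$ for $x_3\neq x_1,x_2$. Cyclic Kautz digraph $CK(d,3)$: vertices $x_1x_2x_3\in\mathbb Z_{d+1}^3$ with $x_1,x_2,x_3$ pairwise distinct; arcs $x_1x_2x_3\to x_2x_3y$ for $y\neq x_2,x_3$. The mean distance of a digraph $G$ on $N$ vertices is $\frac{1}{N^2}\sum_{u,v\in V(G)}\mathrm{dist}(u,v)$ (pairs with $u=v$ included, contributing $0$); for a vertex-transitive digraph this equals $\frac1N\sum_{v}\mathrm{dist}(u,v)$ for any fixed $u$. A digraph is antipodal if every vertex $u$ has exactly one vertex $v$ at distance equal to the diameter from $u$, and simultaneously $u$ is at distance equal to the diameter from $v$. *)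

theory Defs
  imports Complex_Main
begin

text \<open>Distance = length of a shortest directed walk (all digraphs considered here
  are strongly connected, so the LEAST is well defined).\<close>

definition dg_dist :: "('a \<times> 'a) set \<Rightarrow> 'a \<Rightarrow> 'a \<Rightarrow> nat" where
  "dg_dist A u v = (LEAST n. (u, v) \<in> A ^^ n)"

definition mean_distance :: "'a set \<Rightarrow> ('a \<times> 'a) set \<Rightarrow> real" where
  "mean_distance V A =
     (\<Sum>u\<in>V. \<Sum>v\<in>V. real (dg_dist A u v)) / (real (card V))^2"

definition diameter :: "'a set \<Rightarrow> ('a \<times> 'a) set \<Rightarrow> nat" where
  "diameter V A = Max {dg_dist A u v | u v. u \<in> V \<and> v \<in> V}"

definition antipodal :: "'a set \<Rightarrow> ('a \<times> 'a) set \<Rightarrow> bool" where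
  "antipodal V A \<longleftrightarrow>
     (\<forall>u\<in>V. \<exists>v\<in>V. dg_dist A u v = diameter V A \<and> dg_dist A v u = diameter V A
        \<and> (\<forall>w\<in>V. dg_dist A u w = diameter V A \<longrightarrow> w = v))"

text \<open>SubKautz digraph sK(d,2); Z_{d+1} is represented by {0..d}.\<close>
definition sK2_verts :: "nat \<Rightarrow> (nat \<times> nat) set" where
  "sK2_verts d = {(x1, x2). x1 \<le> d \<and> x2 \<le> d \<and> x1 \<noteq> x2}"

definition sK2_arcs :: "nat \<Rightarrow> ((nat \<times> nat) \<times> (nat \<times> nat)) set" where
  "sK2_arcs d = {((x1, x2), (y1, y2)). (x1, x2) \<in> sK2_verts d \<and> (y1, y2) \<in> sK2_verts d
      \<and> y1 = x2 \<and> y2 \<noteq> x1 \<and> y2 \<noteq> x2}"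

definition CK3_verts :: "nat \<Rightarrow> (nat \<times> nat \<times> nat) set" where
  "CK3_verts d = {(x1, x2, x3). x1 \<le> d \<and> x2 \<le> d \<and> x3 \<le> d
      \<and> x1 \<noteq> x2 \<and> x1 \<noteq> x3 \<and> x2 \<noteq> x3}"

definition CK3_arcs :: "nat \<Rightarrow> ((nat \<times> nat \<times> nat) \<times> (nat \<times> nat \<times> nat)) set" where
  "CK3_arcs d = {((x1, x2, x3), (y1, y2, y3)). (x1, x2, x3) \<in> CK3_verts d
      \<and> (y1, y2, y3) \<in> CK3_verts d \<and> y1 = x2 \<and> y2 = x3}"

end

theory Submission imports Defs begin

text \<open>Both digraphs are line-digraph-like word digraphs: a walk shifts the word one letter
  to the left per arc, so the distance from one word to another is determined by how the
  target begins relative to the last letters of the source, and a fresh letter (available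
  because \<open>d \<ge> 3\<close>) can always be inserted to realise the remaining cases. Every permutation of the alphabet is an automorphism, so all row sums
  of the distance matrix agree, and the mean distance is one row sum divided by the order.
  In \<open>sK(d,2)\<close> the only vertex at distance 4 (the diameter) from \<open>ab\<close> is \<open>ba\<close>, and
  vice versa.\<close>

lemma dg_dist_eqI:
  assumes "(u, v) \<in> A ^^ n" and "\<And>m. m < n \<Longrightarrow> (u, v) \<notin> A ^^ m"
  shows "dg_dist A u v = n"
  unfolding dg_dist_def
  by (rule Least_equality) (use assms in \<open>auto simp: not_less[symmetric]\<close>)

lemma diameter_eqI:
  assumes "\<And>u v. u \<in> V \<Longrightarrow> v \<in> V \<Longrightarrow> dg_dist A u v \<le> D"
    and "u \<in> V" "v \<in> V" "dg_dist A u v = D"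
  shows "diameter V A = D"
  unfolding diameter_def
proof (rule Max_eqI)
  let ?S = "{dg_dist A u v | u v. u \<in> V \<and> v \<in> V}"
  have "?S \<subseteq> {..D}" using assms(1) by auto
  then show "finite ?S" by (rule finite_subset) simp
  show "y \<le> D" if "y \<in> ?S" for y using that assms(1) by auto
  show "D \<in> ?S" using assms(2-4) by blast
qed

lemma mean_distance_const_row_sum:
  assumes "\<And>u. u \<in> V \<Longrightarrow> (\<Sum>v\<in>V. real (dg_dist A u v)) = S"
    and "real (card V) = N" and "N > 0"
  shows "mean_distance V A = S / N"
proof -
  have "(\<Sum>u\<in>V. \<Sum>v\<in>V. real (dg_dist A u v)) = N * S"
    using assms(1,2) by simp
  then show ?thesis
    unfolding mean_distance_def using assms(2,3) by (simp add: power2_eq_square)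
qed

lemma exists_fresh_le:
  fixes d :: nat
  assumes "d \<ge> 3"
  shows "\<exists>y\<le>d. y \<noteq> a \<and> y \<noteq> b \<and> y \<noteq> c"
proof (rule ccontr)
  assume "\<not> ?thesis"
  then have "{..d} \<subseteq> {a, b, c}" by auto
  then have "card {..d} \<le> card {a, b, c}" by (intro card_mono) auto
  also have "\<dots> \<le> 3" by (simp add: card_insert_le_m1 card_insert_if)
  finally show False using assms by simp
qed

lemma sum_const_except_one:
  fixes f :: "'a \<Rightarrow> real"
  assumes "finite S" "a \<in> S" "\<And>e. e \<in> S \<Longrightarrow> e \<noteq> a \<Longrightarrow> f e = z"
  shows "sum f S = f a + (real (card S) - 1) * z"
proof -
  have "card S > 0" using assms by (auto simp: card_gt_0_iff)
  have "sum f S = f a + sum f (S - {a})" using assms by (simp add: sum.remove)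
  also have "sum f (S - {a}) = (real (card S) - 1) * z"
    using assms \<open>card S > 0\<close> by (simp add: of_nat_diff)
  finally show ?thesis .
qed

lemma sum_const_except_two:
  fixes f :: "'a \<Rightarrow> real"
  assumes "finite S" "a \<in> S" "b \<in> S" "a \<noteq> b"
    and "\<And>e. e \<in> S \<Longrightarrow> e \<noteq> a \<Longrightarrow> e \<noteq> b \<Longrightarrow> f e = z"
  shows "sum f S = f a + f b + (real (card S) - 2) * z"
proof -
  have "card S > 0" using assms by (auto simp: card_gt_0_iff)
  have "sum f (S - {a}) = f b + (real (card (S - {a})) - 1) * z"
    using assms by (intro sum_const_except_one) auto
  moreover have "real (card (S - {a})) = real (card S) - 1"
    using assms \<open>card S > 0\<close> by (simp add: of_nat_diff)
  ultimately show ?thesis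
    using assms by (simp add: sum.remove algebra_simps)
qed

subsection \<open>The subKautz digraph \<open>sK(d,2)\<close>\<close>

lemma sK2_arcs_iff:
  "((x1, x2), (y1, y2)) \<in> sK2_arcs d \<longleftrightarrow>
     x1 \<le> d \<and> x2 \<le> d \<and> x1 \<noteq> x2 \<and> y1 = x2 \<and> y2 \<le> d \<and> y2 \<noteq> x1 \<and> y2 \<noteq> x2"
  by (auto simp: sK2_arcs_def sK2_verts_def)

lemma sK2_relpow_2D: "((a, b), (c, e)) \<in> sK2_arcs d ^^ 2 \<Longrightarrow> c \<noteq> a \<and> c \<noteq> b \<and> e \<noteq> b"
  by (auto simp: numeral_eq_Suc relcomp_unfold sK2_arcs_iff)

lemma sK2_relpow_3D: "((a, b), (c, e)) \<in> sK2_arcs d ^^ 3 \<Longrightarrow> c \<noteq> b"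
  by (auto simp: numeral_eq_Suc relcomp_unfold sK2_arcs_iff)

definition sK2_dist_formula :: "nat \<Rightarrow> nat \<Rightarrow> nat \<Rightarrow> nat \<Rightarrow> nat" where
  "sK2_dist_formula a b c e =
     (if c = a \<and> e = b then 0 else if c = b \<and> e \<noteq> a then 1
      else if c \<noteq> a \<and> c \<noteq> b \<and> e \<noteq> b then 2 else if c = b \<and> e = a then 4 else 3)"

lemma sK2_no_shorter_walk:
  assumes "m < sK2_dist_formula a b c e"
  shows "((a, b), (c, e)) \<notin> sK2_arcs d ^^ m"
proof -
  have "m \<in> {0, 1, 2, 3}" using assms by (auto simp: sK2_dist_formula_def split: if_splits)
  then show ?thesis using assms
    by (auto simp: sK2_dist_formula_def sK2_arcs_iff dest!: sK2_relpow_2D sK2_relpow_3D split: if_splits)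
qed

lemma sK2_walk:
  assumes "d \<ge> 3" "(a, b) \<in> sK2_verts d" "(c, e) \<in> sK2_verts d"
  shows "((a, b), (c, e)) \<in> sK2_arcs d ^^ sK2_dist_formula a b c e"
proof -
  let ?A = "sK2_arcs d"
  have v: "a \<le> d" "b \<le> d" "a \<noteq> b" "c \<le> d" "e \<le> d" "c \<noteq> e"
    using assms(2,3) by (auto simp: sK2_verts_def)
  consider "c = a" "e = b" | "c = b" "e \<noteq> a" | "c \<noteq> a" "c \<noteq> b" "e \<noteq> b"
    | "c = b" "e = a" | "c = a" "e \<noteq> b" | "c \<noteq> a" "c \<noteq> b" "e = b" by blast
  then show ?thesis
  proof cases
    case 4
    obtain x where x: "x \<le> d" "x \<noteq> a" "x \<noteq> b" using exists_fresh_le[OF assms(1)] by blast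
    obtain y where y: "y \<le> d" "y \<noteq> a" "y \<noteq> b" "y \<noteq> x" using exists_fresh_le[OF assms(1)] by blast
    have "((a, b), (b, x)) \<in> ?A" "((b, x), (x, y)) \<in> ?A" "((x, y), (y, b)) \<in> ?A" "((y, b), (c, e)) \<in> ?A"
      using 4 v x y by (auto simp: sK2_arcs_iff)
    then show ?thesis using 4 v by (simp add: sK2_dist_formula_def numeral_eq_Suc relcomp_unfold) blast
  next
    case 5
    obtain x where x: "x \<le> d" "x \<noteq> a" "x \<noteq> b" "x \<noteq> e" using exists_fresh_le[OF assms(1)] by blast
    have "((a, b), (b, x)) \<in> ?A" "((b, x), (x, a)) \<in> ?A" "((x, a), (c, e)) \<in> ?A"
      using 5 v x by (auto simp: sK2_arcs_iff)
    then show ?thesis using 5 v by (simp add: sK2_dist_formula_def numeral_eq_Suc relcomp_unfold) blast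
  next
    case 6
    obtain x where x: "x \<le> d" "x \<noteq> a" "x \<noteq> b" "x \<noteq> c" using exists_fresh_le[OF assms(1)] by blast
    have "((a, b), (b, x)) \<in> ?A" "((b, x), (x, c)) \<in> ?A" "((x, c), (c, e)) \<in> ?A"
      using 6 v x by (auto simp: sK2_arcs_iff)
    then show ?thesis using 6 v by (simp add: sK2_dist_formula_def numeral_eq_Suc relcomp_unfold) blast
  qed (use v in \<open>auto simp: sK2_dist_formula_def sK2_arcs_iff numeral_eq_Suc relcomp_unfold\<close>)
qed

lemma sK2_dist:
  assumes "d \<ge> 3" "(a, b) \<in> sK2_verts d" "(c, e) \<in> sK2_verts d"
  shows "dg_dist (sK2_arcs d) (a, b) (c, e) = sK2_dist_formula a b c e"
  using sK2_walk[OF assms] sK2_no_shorter_walk by (rule dg_dist_eqI)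

lemma sum_sK2_verts:
  "(\<Sum>x\<in>sK2_verts d. (F x :: real)) = (\<Sum>c\<le>d. \<Sum>e\<le>d. if c \<noteq> e then F (c, e) else 0)"
proof -
  have "sK2_verts d = Sigma {..d} (\<lambda>c. {e \<in> {..d}. c \<noteq> e})"
    by (auto simp: sK2_verts_def)
  then have "(\<Sum>x\<in>sK2_verts d. F x) = (\<Sum>c\<le>d. \<Sum>e\<in>{e \<in> {..d}. c \<noteq> e}. F (c, e))"
    by (simp add: sum.Sigma)
  also have "\<dots> = (\<Sum>c\<le>d. \<Sum>e\<le>d. if c \<noteq> e then F (c, e) else 0)"
    by (intro sum.cong refl sum.inter_filter) simp
  finally show ?thesis .
qed

lemma card_sK2_verts: "real (card (sK2_verts d)) = real d ^ 2 + real d"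
proof -
  have "real (card (sK2_verts d)) = (\<Sum>c\<le>d. \<Sum>e\<le>d. if c \<noteq> e then 1 else 0)"
    using sum_sK2_verts[of "\<lambda>_. 1" d] by simp
  also have "\<dots> = (\<Sum>c\<le>d. real d)"
    by (intro sum.cong refl, subst sum_const_except_one) auto
  finally show ?thesis by (simp add: power2_eq_square algebra_simps)
qed

lemma sK2_row_sum:
  assumes "d \<ge> 3" "(a, b) \<in> sK2_verts d"
  shows "(\<Sum>v\<in>sK2_verts d. real (dg_dist (sK2_arcs d) (a, b) v)) = 2 * real d ^ 2 + 3 * real d - 1"
proof -
  have ab: "a \<le> d" "b \<le> d" "a \<noteq> b" using assms(2) by (auto simp: sK2_verts_def)
  define f where "f c e = (if c \<noteq> e then real (sK2_dist_formula a b c e) else 0)" for c e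
  have "(\<Sum>v\<in>sK2_verts d. real (dg_dist (sK2_arcs d) (a, b) v)) = (\<Sum>c\<le>d. \<Sum>e\<le>d. f c e)"
    unfolding sum_sK2_verts f_def by (intro sum.cong refl) (use assms in \<open>auto simp: sK2_dist sK2_verts_def\<close>)
  also have "\<dots> = (\<Sum>c\<le>d. if c = a then (real d - 1) * 3 else if c = b then 4 + (real d - 1)
                       else 3 + (real d - 1) * 2)"
  proof (rule sum.cong[OF refl])
    fix c assume c: "c \<in> {..d}"
    consider "c = a" | "c = b" | "c \<noteq> a" "c \<noteq> b" by blast
    then show "sum (f c) {..d} = (if c = a then (real d - 1) * 3 else if c = b then 4 + (real d - 1)
                       else 3 + (real d - 1) * 2)"
    proof cases
      case 1 then show ?thesis
        using ab by (subst sum_const_except_two[where a=a and b=b and z=3]) (auto simp: f_def sK2_dist_formula_def)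
    next
      case 2 then show ?thesis
        using ab by (subst sum_const_except_two[where a=b and b=a and z=1]) (auto simp: f_def sK2_dist_formula_def)
    next
      case 3 then show ?thesis
        using ab c by (subst sum_const_except_two[where a=c and b=b and z=2]) (auto simp: f_def sK2_dist_formula_def)
    qed
  qed
  also have "\<dots> = (real d - 1) * 3 + (4 + (real d - 1)) + (real d - 1) * (3 + (real d - 1) * 2)"
    using ab by (subst sum_const_except_two[where a=a and b=b]) auto
  finally show ?thesis by (simp add: power2_eq_square algebra_simps)
qed

lemma sK2_mean_distance:
  assumes "d \<ge> 3"
  shows "mean_distance (sK2_verts d) (sK2_arcs d) = (2 * real d ^ 2 + 3 * real d - 1) / (real d ^ 2 + real d)"
proof (rule mean_distance_const_row_sum)
  show "(\<Sum>v\<in>sK2_verts d. real (dg_dist (sK2_arcs d) u v)) = 2 * real d ^ 2 + 3 * real d - 1"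
    if "u \<in> sK2_verts d" for u
    using sK2_row_sum[OF assms] that by (cases u) auto
qed (use assms card_sK2_verts in \<open>auto intro: add_nonneg_pos\<close>)

lemma sK2_diameter:
  assumes "d \<ge> 3"
  shows "diameter (sK2_verts d) (sK2_arcs d) = 4"
proof (rule diameter_eqI)
  show "dg_dist (sK2_arcs d) u v \<le> 4" if "u \<in> sK2_verts d" "v \<in> sK2_verts d" for u v
    using that sK2_dist[OF assms] by (cases u, cases v) (auto simp: sK2_dist_formula_def)
  show "(0, 1) \<in> sK2_verts d" "(1, 0) \<in> sK2_verts d" using assms by (auto simp: sK2_verts_def)
  then show "dg_dist (sK2_arcs d) (0, 1) (1, 0) = 4"
    using sK2_dist[OF assms] by (simp add: sK2_dist_formula_def)
qed

lemma sK2_antipodal: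
  assumes "d \<ge> 3"
  shows "antipodal (sK2_verts d) (sK2_arcs d)"
  unfolding antipodal_def sK2_diameter[OF assms]
proof
  fix u assume u: "u \<in> sK2_verts d"
  obtain a b where ab: "u = (a, b)" by (cases u)
  have v: "(b, a) \<in> sK2_verts d" using u ab by (auto simp: sK2_verts_def)
  show "\<exists>v\<in>sK2_verts d. dg_dist (sK2_arcs d) u v = 4 \<and> dg_dist (sK2_arcs d) v u = 4 \<and>
          (\<forall>w\<in>sK2_verts d. dg_dist (sK2_arcs d) u w = 4 \<longrightarrow> w = v)"
  proof (intro bexI[OF _ v] conjI ballI impI)
    show "dg_dist (sK2_arcs d) u (b, a) = 4" "dg_dist (sK2_arcs d) (b, a) u = 4"
      using sK2_dist[OF assms] u v ab by (auto simp: sK2_dist_formula_def sK2_verts_def)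
    show "w = (b, a)" if "w \<in> sK2_verts d" "dg_dist (sK2_arcs d) u w = 4" for w
      using that sK2_dist[OF assms] u ab by (cases w) (auto simp: sK2_dist_formula_def split: if_splits)
  qed
qed

subsection \<open>The cyclic Kautz digraph \<open>CK(d,3)\<close>\<close>

lemma CK3_arcs_iff:
  "((x1, x2, x3), (y1, y2, y3)) \<in> CK3_arcs d \<longleftrightarrow>
     x1 \<le> d \<and> x2 \<le> d \<and> x3 \<le> d \<and> x1 \<noteq> x2 \<and> x1 \<noteq> x3 \<and> x2 \<noteq> x3
     \<and> y1 = x2 \<and> y2 = x3 \<and> y3 \<le> d \<and> y3 \<noteq> x2 \<and> y3 \<noteq> x3"
  by (auto simp: CK3_arcs_def CK3_verts_def)

lemma CK3_relpow_2D:
  "((a, b, c), (p, q, r)) \<in> CK3_arcs d ^^ 2 \<Longrightarrow> p = c \<and> q \<noteq> b \<and> q \<noteq> c"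
  by (auto simp: numeral_eq_Suc relcomp_unfold CK3_arcs_iff)

lemma CK3_relpow_3D:
  "((a, b, c), (p, q, r)) \<in> CK3_arcs d ^^ 3 \<Longrightarrow> p \<noteq> b \<and> p \<noteq> c \<and> q \<noteq> c"
  by (auto simp: numeral_eq_Suc relcomp_unfold CK3_arcs_iff)

lemma CK3_relpow_4D: "((a, b, c), (p, q, r)) \<in> CK3_arcs d ^^ 4 \<Longrightarrow> p \<noteq> c"
  by (auto simp: numeral_eq_Suc relcomp_unfold CK3_arcs_iff)

definition CK3_dist_formula :: "nat \<Rightarrow> nat \<Rightarrow> nat \<Rightarrow> nat \<Rightarrow> nat" where
  "CK3_dist_formula b c p q =
     (if p = b then (if q = c then 1 else 4)
      else if p = c then (if q = b then 5 else 2)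
      else (if q = c then 4 else 3))"

lemma CK3_no_shorter_walk:
  assumes "m < CK3_dist_formula b c p q" "b \<noteq> c" "(p, q, r) \<noteq> (a, b, c)"
  shows "((a, b, c), (p, q, r)) \<notin> CK3_arcs d ^^ m"
proof -
  have "m \<in> {0, 1, 2, 3, 4}" using assms by (auto simp: CK3_dist_formula_def split: if_splits)
  then show ?thesis using assms
    by (auto simp: CK3_dist_formula_def CK3_arcs_iff dest!: CK3_relpow_2D CK3_relpow_3D CK3_relpow_4D
        split: if_splits)
qed

lemma CK3_walk:
  assumes "d \<ge> 3" "(a, b, c) \<in> CK3_verts d" "(p, q, r) \<in> CK3_verts d" "(p, q, r) \<noteq> (a, b, c)"
  shows "((a, b, c), (p, q, r)) \<in> CK3_arcs d ^^ CK3_dist_formula b c p q"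
proof -
  let ?A = "CK3_arcs d"
  have v: "a \<le> d" "b \<le> d" "c \<le> d" "a \<noteq> b" "a \<noteq> c" "b \<noteq> c"
    "p \<le> d" "q \<le> d" "r \<le> d" "p \<noteq> q" "p \<noteq> r" "q \<noteq> r"
    using assms(2,3) by (auto simp: CK3_verts_def)
  obtain y where y: "y \<le> d" "y \<noteq> b" "y \<noteq> c" "y \<noteq> (if p = b then q else p)"
    using exists_fresh_le[OF assms(1)] by blast
  obtain z where z: "z \<le> d" "z \<noteq> a" "z \<noteq> b" "z \<noteq> c"
    using exists_fresh_le[OF assms(1)] by blast
  consider "p = b" "q = c" | "p = c" "q \<noteq> b" | "p \<noteq> b" "p \<noteq> c" "q \<noteq> c"
    | "p = b" "q \<noteq> c" | "p \<noteq> b" "p \<noteq> c" "q = c" | "p = c" "q = b" by blast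
  then show ?thesis
  proof cases
    case 2
    have "((a, b, c), (b, c, q)) \<in> ?A" "((b, c, q), (p, q, r)) \<in> ?A"
      using 2 v by (auto simp: CK3_arcs_iff)
    then show ?thesis using 2 v by (simp add: CK3_dist_formula_def numeral_eq_Suc relcomp_unfold) blast
  next
    case 3
    have "((a, b, c), (b, c, p)) \<in> ?A" "((b, c, p), (c, p, q)) \<in> ?A" "((c, p, q), (p, q, r)) \<in> ?A"
      using 3 v by (auto simp: CK3_arcs_iff)
    then show ?thesis using 3 v by (simp add: CK3_dist_formula_def numeral_eq_Suc relcomp_unfold) blast
  next
    case 4
    have "((a, b, c), (b, c, y)) \<in> ?A" "((b, c, y), (c, y, p)) \<in> ?A"
      "((c, y, p), (y, p, q)) \<in> ?A" "((y, p, q), (p, q, r)) \<in> ?A"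
      using 4 v y by (auto simp: CK3_arcs_iff)
    then show ?thesis using 4 v by (simp add: CK3_dist_formula_def numeral_eq_Suc relcomp_unfold) blast
  next
    case 5
    have "((a, b, c), (b, c, y)) \<in> ?A" "((b, c, y), (c, y, p)) \<in> ?A"
      "((c, y, p), (y, p, q)) \<in> ?A" "((y, p, q), (p, q, r)) \<in> ?A"
      using 5 v y by (auto simp: CK3_arcs_iff)
    then show ?thesis using 5 v by (simp add: CK3_dist_formula_def numeral_eq_Suc relcomp_unfold) blast
  next
    case 6
    have "((a, b, c), (b, c, a)) \<in> ?A" "((b, c, a), (c, a, z)) \<in> ?A" "((c, a, z), (a, z, c)) \<in> ?A"
      "((a, z, c), (z, c, b)) \<in> ?A" "((z, c, b), (p, q, r)) \<in> ?A"
      using 6 v z by (auto simp: CK3_arcs_iff)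
    then show ?thesis using 6 v by (simp add: CK3_dist_formula_def numeral_eq_Suc relcomp_unfold) blast
  qed (use v in \<open>auto simp: CK3_dist_formula_def CK3_arcs_iff\<close>)
qed

lemma CK3_dist:
  assumes "d \<ge> 3" "(a, b, c) \<in> CK3_verts d" "(p, q, r) \<in> CK3_verts d"
  shows "dg_dist (CK3_arcs d) (a, b, c) (p, q, r) =
           (if (p, q, r) = (a, b, c) then 0 else CK3_dist_formula b c p q)"
proof (cases "(p, q, r) = (a, b, c)")
  case True then show ?thesis by (simp add: dg_dist_def)
next
  case False
  have "b \<noteq> c" using assms(2) by (simp add: CK3_verts_def)
  have "dg_dist (CK3_arcs d) (a, b, c) (p, q, r) = CK3_dist_formula b c p q"
    using CK3_walk[OF assms False] CK3_no_shorter_walk[OF _ \<open>b \<noteq> c\<close> False] by (rule dg_dist_eqI)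
  with False show ?thesis by auto
qed

lemma sum_CK3_verts_first_two:
  fixes F :: "nat \<Rightarrow> nat \<Rightarrow> real"
  shows "(\<Sum>(p, q, r)\<in>CK3_verts d. F p q) = (real d - 1) * (\<Sum>(p, q)\<in>sK2_verts d. F p q)"
proof -
  define R where "R p q = {r \<in> {..d}. p \<noteq> q \<and> p \<noteq> r \<and> q \<noteq> r}" for p q
  have "CK3_verts d = Sigma {..d} (\<lambda>p. Sigma {..d} (R p))"
    by (auto simp: CK3_verts_def R_def)
  then have "(\<Sum>(p, q, r)\<in>CK3_verts d. F p q) = (\<Sum>p\<le>d. \<Sum>(q, r)\<in>Sigma {..d} (R p). F p q)"
    by (simp add: sum.Sigma R_def)
  also have "\<dots> = (\<Sum>p\<le>d. \<Sum>q\<le>d. real (card (R p q)) * F p q)"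
    by (intro sum.cong refl) (subst sum.Sigma[symmetric]; simp add: R_def)
  also have "\<dots> = (\<Sum>p\<le>d. \<Sum>q\<le>d. if p \<noteq> q then (real d - 1) * F p q else 0)"
  proof (intro sum.cong refl)
    fix p q assume "p \<in> {..d}" "q \<in> {..d}"
    then have "R p q = (if p \<noteq> q then {..d} - {p, q} else {})" by (auto simp: R_def)
    with \<open>p \<in> {..d}\<close> \<open>q \<in> {..d}\<close> show "real (card (R p q)) * F p q = (if p \<noteq> q then (real d - 1) * F p q else 0)"
      by (simp add: card_Diff_subset of_nat_diff)
  qed
  also have "\<dots> = (real d - 1) * (\<Sum>(p, q)\<in>sK2_verts d. F p q)"
    unfolding sum_sK2_verts sum_distrib_left by (intro sum.cong refl) simp
  finally show ?thesis .
qed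

lemma card_CK3_verts: "real (card (CK3_verts d)) = real d ^ 3 - real d"
proof -
  have "real (card (CK3_verts d)) = (\<Sum>(p, q, r)\<in>CK3_verts d. 1)" by simp
  also have "\<dots> = (real d - 1) * real (card (sK2_verts d))"
    using sum_CK3_verts_first_two[of "\<lambda>_ _. 1" d] by simp
  finally show ?thesis by (simp add: card_sK2_verts power2_eq_square power3_eq_cube algebra_simps)
qed

lemma sum_CK3_dist_formula:
  assumes "b \<le> d" "c \<le> d" "b \<noteq> c"
  shows "(\<Sum>(p, q)\<in>sK2_verts d. real (CK3_dist_formula b c p q)) = 3 * real d ^ 2 + 4 * real d - 1"
proof -
  define K where "K = real d - 1"
  define f where "f p q = (if p \<noteq> q then real (CK3_dist_formula b c p q) else 0)" for p q
  have "(\<Sum>(p, q)\<in>sK2_verts d. real (CK3_dist_formula b c p q)) = (\<Sum>p\<le>d. \<Sum>q\<le>d. f p q)"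
    unfolding sum_sK2_verts f_def by (intro sum.cong refl) simp
  also have "\<dots> = (\<Sum>p\<le>d. if p = b then 1 + K * 4 else if p = c then 5 + K * 2 else 4 + K * 3)"
  proof (rule sum.cong[OF refl])
    fix p assume p: "p \<in> {..d}"
    consider "p = b" | "p = c" | "p \<noteq> b" "p \<noteq> c" by blast
    then show "sum (f p) {..d} = (if p = b then 1 + K * 4 else if p = c then 5 + K * 2 else 4 + K * 3)"
    proof cases
      case 1 then show ?thesis
        using assms by (subst sum_const_except_two[where a=b and b=c and z=4]) (auto simp: f_def CK3_dist_formula_def K_def)
    next
      case 2 then show ?thesis
        using assms by (subst sum_const_except_two[where a=c and b=b and z=2]) (auto simp: f_def CK3_dist_formula_def K_def)
    next
      case 3 then show ?thesis
        using assms p by (subst sum_const_except_two[where a=p and b=c and z=3]) (auto simp: f_def CK3_dist_formula_def K_def)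
    qed
  qed
  also have "\<dots> = (1 + K * 4) + (5 + K * 2) + K * (4 + K * 3)"
    using assms by (subst sum_const_except_two[where a=b and b=c]) (auto simp: K_def)
  finally show ?thesis by (simp add: K_def power2_eq_square algebra_simps)
qed

lemma CK3_row_sum:
  assumes "d \<ge> 3" "(a, b, c) \<in> CK3_verts d"
  shows "(\<Sum>v\<in>CK3_verts d. real (dg_dist (CK3_arcs d) (a, b, c) v)) = 3 * real d ^ 3 + real d ^ 2 - 5 * real d - 2"
proof -
  have v: "a \<le> d" "b \<le> d" "c \<le> d" "a \<noteq> b" "a \<noteq> c" "b \<noteq> c"
    using assms(2) by (auto simp: CK3_verts_def)
  have fin: "finite (CK3_verts d)"
    by (rule finite_subset[of _ "{..d} \<times> {..d} \<times> {..d}"]) (auto simp: CK3_verts_def)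
  let ?g = "\<lambda>(p, q, r). real (CK3_dist_formula b c p q)"
  \<comment> \<open>The formula evaluates to 3 at the source itself, whose distance is 0.\<close>
  have "(\<Sum>v\<in>CK3_verts d. real (dg_dist (CK3_arcs d) (a, b, c) v))
      = (\<Sum>v\<in>CK3_verts d. ?g v - (if v = (a, b, c) then 3 else 0))"
  proof (rule sum.cong[OF refl])
    fix v assume "v \<in> CK3_verts d"
    then show "real (dg_dist (CK3_arcs d) (a, b, c) v) = ?g v - (if v = (a, b, c) then 3 else 0)"
      using CK3_dist[OF assms] v by (cases v) (auto simp: CK3_dist_formula_def)
  qed
  also have "\<dots> = (\<Sum>v\<in>CK3_verts d. ?g v) - 3"
    using assms(2) fin by (simp add: sum_subtractf)
  also have "\<dots> = (real d - 1) * (3 * real d ^ 2 + 4 * real d - 1) - 3"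
    using sum_CK3_verts_first_two sum_CK3_dist_formula v by simp
  finally show ?thesis by (simp add: power2_eq_square power3_eq_cube algebra_simps)
qed

lemma CK3_mean_distance:
  assumes "d \<ge> 3"
  shows "mean_distance (CK3_verts d) (CK3_arcs d)
           = (3 * real d ^ 3 + real d ^ 2 - 5 * real d - 2) / (real d ^ 3 - real d)"
proof (rule mean_distance_const_row_sum)
  show "(\<Sum>v\<in>CK3_verts d. real (dg_dist (CK3_arcs d) u v)) = 3 * real d ^ 3 + real d ^ 2 - 5 * real d - 2"
    if "u \<in> CK3_verts d" for u
    using CK3_row_sum[OF assms] that by (cases u) auto
  have "real d ^ 3 - real d = real d * (real d * real d - 1)"
    by (simp add: power3_eq_cube algebra_simps)
  moreover have "real d * real d \<ge> 3 * 3" using assms by (intro mult_mono) auto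
  ultimately show "real d ^ 3 - real d > 0" using assms by simp
qed (rule card_CK3_verts)

theorem mainTheorem15:
  fixes d :: nat
  assumes "d \<ge> 3"
  shows "antipodal (sK2_verts d) (sK2_arcs d)
       \<and> mean_distance (sK2_verts d) (sK2_arcs d)
           = (2 * real d ^ 2 + 3 * real d - 1) / (real d ^ 2 + real d)
       \<and> mean_distance (CK3_verts d) (CK3_arcs d)
           = (3 * real d ^ 3 + real d ^ 2 - 5 * real d - 2) / (real d ^ 3 - real d)"
  using sK2_antipodal[OF assms] sK2_mean_distance[OF assms] CK3_mean_distance[OF assms] by blast

end
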